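(* In the situation described in the context: (1) for each $r\in[1,\sigma]$, $V=X_r\oplus X_r^\perp$. (2) Assume moreover that $g$ is unipotent and put $N=g-1$, $p_{\sigma+1}=\kappa/2$, and $\Lambda_k=\sum_{r\in[1,\sigma+1]}\max(2p_r-k,0)$ for $k\ge 0$. Then $\dim N^kV\ge\Lambda_k$ for every $k\ge0$, with equality for $k=0$. (3) If $\dim N^kV=\Lambda_k$ for all $k\ge0$, then each $X_r$ ($r\in[1,\sigma+1]$) is $g$-stable and $(X_r,X_{r'})=0$ for all $r\ne r'$ in $[1,\sigma+1]$.
   Context: Let $\mathbf k$ be algebraically closed of characteristic $p$. Let $V$ be a $\mathbf k$-vector space of dimension $\mathfrak n\ge3$, $\kappa\in\{0,1\}$ with $\kappa\equiv\mathfrak n\pmod2$, $n=(\mathfrak n-\kappa)/2$, with a bilinear form $(\,,)$ and quadratic form $Q$ such that either (i) $Q=0$, $(x,x)=0$ for all $x$, $V^\perp=0$; or (ii) $Q\neq0$, $(x,y)=Q(x+y)-Q(x)-Q(y)$, $Q|_{V^\perp}$ injective. $Is(V)$ is the group of $g\in GL(V)$ preserving $(\,,)$ and $Q$. $\mathcal F$ is the set of flags $V_*=(0=V_0\subset\dots\subset V_{\mathfrak n}=V)$, $\dim V_i=i$, with $Q|_{V_i}=0$ and $V_i^\perp=V_{\mathfrak n-i}$ for $i\in[0,n]$. For $V_*,V'_*\in\mathcal F$, $a_{V_*,V'_*}$ is the permutation $i\mapsto a_i$ of $[1,\mathfrak n]$ where $X_i=\{j: V'_i\cap V_j\ne V'_i\cap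 V_{j-1}\}$ and $X_i=X_{i-1}\sqcup\{a_i\}$. For $p_*=(p_1\ge\dots\ge p_\sigma)$, integers $\ge1$ with sum $n$, $p_{<r}=\sum_{r'<r}p_{r'}$, $p_{\le r}=\sum_{r'\le r}p_{r'}$, and $w_{p_*}$ is the permutation with cycles $p_{<r}+1\mapsto\dots\mapsto p_{\le r}\mapsto\mathfrak n-p_{<r}\mapsto\dots\mapsto\mathfrak n-p_{\le r}+1\mapsto p_{<r}+1$ ($r\in[1,\sigma]$), fixing $n+1$ if $\kappa=1$. Situation: $V_*,V'_*\in\mathcal F$ with $a_{V_*,V'_*}=w_{p_*}$, $g\in Is(V)$ with $gV_*=V'_*$, and $v_1,\dots,v_\sigma\in V$ (and $v_{\sigma+1}$ if $\kappa=1$) such that, writing $Z_k$ for the span of $v_k,gv_k,\dots,g^{p_k-1}v_k$: $V_{p_{<r}+i}=Z_1+\dots+Z_{r-1}+\mathrm{span}(v_r,\dots,g^{i-1}v_r)$ for $i\in[0,p_r]$; $(g^iv_t,v_r)=0$ for $t<r\le\sigma$, $i\in[-p_t,p_t-1]$; $(v_r,g^iv_r)=0$ for $|i|\le p_r-1$, $Q(v_r)=0$, $(v_r,g^{p_r}v_r)=1$; and, if $\kappa=1$, $(g^iv_t,v_{\sigma+1})=0$ for $t\in[1,\sigma]$, $i\in[-p_t,p_t-1]$ and $Q(v_{\sigma+1})=1$. (Such vectors exist and the vectors $g^jv_t$, $t\in[1,\sigma]$, $j\in[-p_t,p_t-1]$, together with $v_{\sigma+1}$ if $\kappa=1$, form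 a basis of $V$.) For $r\in[1,\sigma]$, $X_r$ is the span of $g^{-p_r+i}v_r$, $i\in[0,2p_r-1]$; $X_{\sigma+1}=0$ if $\kappa=0$ and $X_{\sigma+1}=\mathbf k v_{\sigma+1}$ if $\kappa=1$. *)

theory Defs
  imports "HOL-Computational_Algebra.Polynomial"
begin

definition perp :: "('v \<Rightarrow> 'v \<Rightarrow> 'k::field) \<Rightarrow> 'v set \<Rightarrow> 'v set" where
  "perp B S = {x. \<forall>y\<in>S. B x y = 0}"

definition form_conditions ::
  "('k::field \<Rightarrow> 'v::ab_group_add \<Rightarrow> 'v) \<Rightarrow> ('v \<Rightarrow> 'v \<Rightarrow> 'k) \<Rightarrow> ('v \<Rightarrow> 'k) \<Rightarrow> bool" where
  "form_conditions scale B Q \<longleftrightarrow>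
     (\<forall>x y z. B (x + y) z = B x z + B y z) \<and>
     (\<forall>x y z. B x (y + z) = B x y + B x z) \<and>
     (\<forall>c x y. B (scale c x) y = c * B x y) \<and>
     (\<forall>c x y. B x (scale c y) = c * B x y) \<and>
     (\<forall>c x. Q (scale c x) = c ^ 2 * Q x) \<and>
     ( ((\<forall>x. Q x = 0) \<and> (\<forall>x. B x x = 0) \<and> perp B UNIV = {0})
     \<or> ((\<exists>x. Q x \<noteq> 0) \<and> (\<forall>x y. B x y = Q (x + y) - Q x - Q y) \<and> inj_on Q (perp B UNIV)))"

definition isometry ::
  "('k::field \<Rightarrow> 'v::ab_group_add \<Rightarrow> 'v) \<Rightarrow> ('v \<Rightarrow> 'v \<Rightarrow> 'k) \<Rightarrow> ('v \<Rightarrow> 'k) \<Rightarrow> ('v \<Rightarrow> 'v) \<Rightarrow> bool" where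
  "isometry scale B Q g \<longleftrightarrow> Vector_Spaces.linear scale scale g \<and> bij g \<and>
     (\<forall>x y. B (g x) (g y) = B x y) \<and> (\<forall>x. Q (g x) = Q x)"

definition is_flag ::
  "('k::field \<Rightarrow> 'v::ab_group_add \<Rightarrow> 'v) \<Rightarrow> ('v \<Rightarrow> 'v \<Rightarrow> 'k) \<Rightarrow> ('v \<Rightarrow> 'k) \<Rightarrow> nat \<Rightarrow> (nat \<Rightarrow> 'v set) \<Rightarrow> bool" where
  "is_flag scale B Q nn V \<longleftrightarrow>
     (\<forall>i\<le>nn. module.subspace scale (V i) \<and> vector_space.dim scale (V i) = i) \<and>
     (\<forall>i<nn. V i \<subseteq> V (Suc i)) \<and> V 0 = {0} \<and> V nn = UNIV \<and>
     (\<forall>i\<le>nn div 2. (\<forall>x\<in>V i. Q x = 0) \<and> perp B (V i) = V (nn - i))"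

definition relX :: "nat \<Rightarrow> (nat \<Rightarrow> 'v set) \<Rightarrow> (nat \<Rightarrow> 'v set) \<Rightarrow> nat \<Rightarrow> nat set" where
  "relX nn V V' i = {j\<in>{1..nn}. V' i \<inter> V j \<noteq> V' i \<inter> V (j - 1)}"

text \<open>a_{V,V'} = a : X_i = X_{i-1} disjoint-union {a_i} for all i in [1,nn].\<close>
definition rel_pos_eq :: "nat \<Rightarrow> (nat \<Rightarrow> 'v set) \<Rightarrow> (nat \<Rightarrow> 'v set) \<Rightarrow> (nat \<Rightarrow> nat) \<Rightarrow> bool" where
  "rel_pos_eq nn V V' a \<longleftrightarrow>
     (\<forall>i\<in>{1..nn}. a i \<notin> relX nn V V' (i - 1) \<and> relX nn V V' i = insert (a i) (relX nn V V' (i - 1)))"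

definition plt :: "(nat \<Rightarrow> nat) \<Rightarrow> nat \<Rightarrow> nat" where
  "plt p r = (\<Sum>r'\<in>{1..<r}. p r')"
definition ple :: "(nat \<Rightarrow> nat) \<Rightarrow> nat \<Rightarrow> nat" where
  "ple p r = (\<Sum>r'\<in>{1..r}. p r')"

text \<open>For 1 \<le> i \<le> n, the unique r with p_{<r} < i \<le> p_{\<le>r}.\<close>
definition cyc :: "(nat \<Rightarrow> nat) \<Rightarrow> nat \<Rightarrow> nat" where
  "cyc p i = (LEAST r. i \<le> ple p r)"

definition wperm :: "nat \<Rightarrow> (nat \<Rightarrow> nat) \<Rightarrow> nat \<Rightarrow> nat" where
  "wperm nn p i =
     (if 1 \<le> i \<and> i \<le> nn div 2 then
        (let r = cyc p i in if i < ple p r then i + 1 else nn - plt p r)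
      else if nn - nn div 2 < i \<and> i \<le> nn then
        (let j = nn + 1 - i; r = cyc p j in if j = ple p r then plt p r + 1 else i - 1)
      else i)"

definition gpow :: "('v \<Rightarrow> 'v) \<Rightarrow> int \<Rightarrow> 'v \<Rightarrow> 'v" where
  "gpow g i = (if 0 \<le> i then g ^^ nat i else inv g ^^ nat (- i))"

definition Xsp :: "('k::field \<Rightarrow> 'v::ab_group_add \<Rightarrow> 'v) \<Rightarrow> ('v \<Rightarrow> 'v) \<Rightarrow> (nat \<Rightarrow> 'v) \<Rightarrow>
    (nat \<Rightarrow> nat) \<Rightarrow> nat \<Rightarrow> nat \<Rightarrow> nat \<Rightarrow> 'v set" where
  "Xsp scale g v p \<sigma> \<kappa> r =
     (if r \<le> \<sigma> then module.span scale {gpow g (i - int (p r)) (v r) | i. 0 \<le> i \<and> i \<le> 2 * int (p r) - 1}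
      else if \<kappa> = 0 then {0} else {scale c (v (\<sigma> + 1)) | c. True})"

definition unipotent :: "('v::ab_group_add \<Rightarrow> 'v) \<Rightarrow> bool" where
  "unipotent g \<longleftrightarrow> (\<exists>m. \<forall>x. ((\<lambda>y. g y - y) ^^ m) x = 0)"

text \<open>Lambda_k = sum_{r in [1,sigma+1]} max(2 p_r - k, 0) with 2 p_{sigma+1} = kappa
  (natural-number truncated subtraction implements max(_,0)).\<close>
definition Lam :: "(nat \<Rightarrow> nat) \<Rightarrow> nat \<Rightarrow> nat \<Rightarrow> nat \<Rightarrow> nat" where
  "Lam p \<sigma> \<kappa> k = (\<Sum>r\<in>{1..\<sigma>}. 2 * p r - k) + (\<kappa> - k)"

end

theory Submission
  imports Defs "HOL-Library.Product_Lexorder"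
begin

text \<open>
  Put \<open>e (t, s) = g\<^sup>s\<^sup>-\<^sup>p\<^sup>t v\<^sub>t\<close> for \<open>1 \<le> t \<le> \<sigma>\<close>, \<open>s < 2 p\<^sub>t\<close>; the block \<open>X\<^sub>t\<close> is their span.
  The hypotheses on the \<open>v\<^sub>r\<close> make the pairing of the \<open>e j\<close> against suitable partners
  \<open>e (dual j)\<close> triangular with nonzero diagonal.  This gives at once the independence of all
  the \<open>e j\<close> and the nondegeneracy of every \<open>X\<^sub>r\<close>, whence \<open>V = X\<^sub>r \<oplus> X\<^sub>r\<^sup>\<bottom>\<close> (statement (1)).
  With \<open>N = g - 1\<close>, the chain \<open>N\<^sup>s e (t, 0)\<close>, \<open>s < 2 p\<^sub>t\<close>, spans \<open>X\<^sub>t\<close>; the chain vectors with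
  \<open>s \<ge> k\<close> are independent and lie in \<open>N\<^sup>k V\<close>, giving \<open>dim N\<^sup>k V \<ge> \<Lambda>\<^sub>k\<close> (statement (2)).  If equality
  holds they span \<open>N\<^sup>k V\<close>; then, by induction on \<open>r\<close>, the vector \<open>N\<^sup>2\<^sup>p\<^sup>r e (r, 0)\<close> lies in the span
  of the earlier, already \<open>g\<close>-stable blocks and is orthogonal to them, so it vanishes and
  \<open>X\<^sub>r\<close> is \<open>g\<close>-stable; stability of earlier blocks also yields the orthogonality of the blocks
  and, for \<open>\<kappa> = 1\<close>, that \<open>g\<close> fixes \<open>v\<^sub>\<sigma>\<^sub>+\<^sub>1\<close> (statement (3)).
\<close>

context vector_space
begin

lemma independent_family:
  assumes fin: "finite I"
    and trivial: "\<And>c. (\<Sum>i\<in>I. c i *s f i) = 0 \<Longrightarrow> \<forall>i\<in>I. c i = 0"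
  shows "inj_on f I" and "independent (f ` I)"
proof -
  show inj: "inj_on f I"
  proof (rule inj_onI, rule ccontr)
    fix a b assume a: "a \<in> I" and b: "b \<in> I" and eq: "f a = f b" and ne: "a \<noteq> b"
    define c where "c i = (if i = a then 1 else if i = b then -1 else (0::'a))" for i
    have "c i *s f i = (if i = a then f a else 0) - (if i = b then f b else 0)" for i
      using ne by (simp add: c_def)
    then have "(\<Sum>i\<in>I. c i *s f i) = f a - f b"
      using fin a b by (simp add: sum_subtractf)
    then have "c a = 0" using trivial[of c] eq a by simp
    then show False by (simp add: c_def)
  qed
  show "independent (f ` I)"
  proof (rule independent_if_scalars_zero)
    show "finite (f ` I)" using fin by simp
    fix u x assume zero: "(\<Sum>y\<in>f ` I. u y *s y) = 0" and x: "x \<in> f ` I"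
    have "(\<Sum>i\<in>I. u (f i) *s f i) = 0" using zero by (simp add: sum.reindex[OF inj])
    then show "u x = 0" using trivial[of "u \<circ> f"] x by auto
  qed
qed

lemma span_image_sum:
  assumes "finite I" "inj_on f I" "x \<in> span (f ` I)"
  obtains c where "x = (\<Sum>i\<in>I. c i *s f i)"
proof -
  obtain u where "x = (\<Sum>y\<in>f ` I. u y *s y)"
    using assms by (auto simp: span_finite)
  then have "x = (\<Sum>i\<in>I. (u \<circ> f) i *s f i)" using assms(2) by (simp add: sum.reindex)
  then show ?thesis by (rule that)
qed

end

context finite_dimensional_vector_space
begin

lemma spanning_family_independent:
  assumes fin: "finite I" and inj: "inj_on f I" and ind: "independent (f ` I)"
    and span_eq: "span (h ` I) = span (f ` I)"
  shows "inj_on h I" and "independent (h ` I)"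
proof -
  have dim: "dim (span (f ` I)) = card I"
    using dim_span_eq_card_independent[OF ind] card_image[OF inj] by simp
  show ind_h: "independent (h ` I)"
  proof (rule card_le_dim_spanning[where V = "span (f ` I)"])
    show "h ` I \<subseteq> span (f ` I)" using span_eq span_superset by blast
    show "span (f ` I) \<subseteq> span (h ` I)" using span_eq by simp
    show "finite (h ` I)" using fin by simp
    show "card (h ` I) \<le> dim (span (f ` I))" using dim card_image_le[OF fin] by simp
  qed
  have "card (h ` I) = card I"
    using dim_span_eq_card_independent[OF ind_h] span_eq dim by simp
  then show "inj_on h I" using eq_card_imp_inj_on[OF fin] by blast
qed

end

context module
begin

text \<open>Applied with \<open>(a, b) = (g, g - 1)\<close> and \<open>(g - 1, g)\<close>.\<close>
lemma iterate_in_chain_span: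
  assumes hom: "module_hom scale scale a" and step: "\<And>y. a y \<in> span {b y, y}"
    and l: "l < m"
  shows "(a ^^ l) x \<in> span {(b ^^ j) x | j. j < m}"
  using l
proof (induction l arbitrary: m)
  case 0
  then show ?case by (intro span_base) force
next
  case (Suc l)
  let ?C = "{(b ^^ j) x | j. j < m}"
  have gens: "a ` {(b ^^ j) x | j. j < Suc l} \<subseteq> span ?C"
  proof clarify
    fix j assume j: "j < Suc l"
    have "j < m" "Suc j < m" using j Suc.prems by simp_all
    then have "(b ^^ Suc j) x \<in> ?C" "(b ^^ j) x \<in> ?C" by blast+
    then have "{b ((b ^^ j) x), (b ^^ j) x} \<subseteq> ?C" by simp
    then show "a ((b ^^ j) x) \<in> span ?C" using step span_mono by blast
  qed
  have "(a ^^ l) x \<in> span {(b ^^ j) x | j. j < Suc l}" by (rule Suc.IH) simp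
  then have "(a ^^ Suc l) x \<in> span (a ` {(b ^^ j) x | j. j < Suc l})"
    by (simp add: module_hom.span_image[OF hom])
  also have "\<dots> \<subseteq> span ?C" using gens span_minimal by blast
  finally show ?case .
qed

lemma chain_span_eq:
  assumes "module_hom scale scale a" "\<And>y. a y \<in> span {b y, y}"
    and "module_hom scale scale b" "\<And>y. b y \<in> span {a y, y}"
  shows "span {(a ^^ l) x | l. l < m} = span {(b ^^ l) x | l. l < m}"
  using iterate_in_chain_span[OF assms(1,2)] iterate_in_chain_span[OF assms(3,4)]
  unfolding span_eq by blast

lemma nilpotent_chain_stable:
  assumes hom: "module_hom scale scale f" and nil: "(f ^^ m) x = 0"
  shows "f ` span {(f ^^ l) x | l. l < m} \<subseteq> span {(f ^^ l) x | l. l < m}"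
proof -
  let ?C = "{(f ^^ l) x | l. l < m}"
  have "f ((f ^^ l) x) \<in> span ?C" if "l < m" for l
  proof (cases "Suc l < m")
    case True
    then have "(f ^^ Suc l) x \<in> ?C" by blast
    then show ?thesis by (simp add: span_base)
  next
    case False
    then have "Suc l = m" using that by simp
    then have "f ((f ^^ l) x) = (f ^^ m) x" by auto
    then show ?thesis using nil by (simp add: span_zero)
  qed
  then have "f ` ?C \<subseteq> span ?C" by blast
  then show ?thesis
    by (simp add: module_hom.span_image[OF hom, symmetric] span_minimal)
qed

end

text \<open>A bilinear form on a finite-dimensional vector space which is \<open>\<epsilon>\<close>-symmetric,
  \<open>\<epsilon> = \<plusminus>1\<close>; this covers both the alternating and the quadratic case of the paper.\<close>
locale eps_form = fd: finite_dimensional_vector_space scale Basis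
  for scale :: "'k::field \<Rightarrow> 'v::ab_group_add \<Rightarrow> 'v" and Basis :: "'v set" +
  fixes B :: "'v \<Rightarrow> 'v \<Rightarrow> 'k" and \<epsilon> :: 'k
  assumes add_left: "B (x + y) z = B x z + B y z"
    and add_right: "B x (y + z) = B x y + B x z"
    and scale_left: "B (scale c x) y = c * B x y"
    and scale_right: "B x (scale c y) = c * B x y"
    and eps: "\<epsilon> = 1 \<or> \<epsilon> = -1"
    and eps_sym: "B y x = \<epsilon> * B x y"
begin

lemma zero_left [simp]: "B 0 y = 0"
  using scale_left[of 0 0 y] by simp

lemma zero_right [simp]: "B x 0 = 0"
  using scale_right[of x 0 0] by simp

lemma diff_left: "B (x - y) z = B x z - B y z"
  using add_left[of "x - y" y z] by simp

lemma diff_right: "B x (y - z) = B x y - B x z"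
  using add_right[of x "y - z" z] by simp

lemma sum_left: "B (\<Sum>i\<in>I. scale (c i) (f i)) y = (\<Sum>i\<in>I. c i * B (f i) y)"
  by (induction I rule: infinite_finite_induct) (auto simp: add_left scale_left)

lemma orth_sym: "B x y = 0 \<longleftrightarrow> B y x = 0"
  using eps_sym[of x y] eps by auto

lemma orth_span_left:
  assumes "\<And>s. s \<in> S \<Longrightarrow> B s y = 0" and "x \<in> fd.span S"
  shows "B x y = 0"
  using assms(2) by (induction rule: fd.span_induct_alt) (auto simp: add_left scale_left assms(1))

lemma orth_span_right:
  assumes "\<And>s. s \<in> S \<Longrightarrow> B y s = 0" and "x \<in> fd.span S"
  shows "B y x = 0"
  using orth_span_left[of S y x] assms orth_sym by blast

lemma perp_subspace: "fd.subspace (perp B S)"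
  unfolding fd.subspace_def perp_def by (auto simp: add_left scale_left)

lemma perp_span: "perp B (fd.span S) = perp B S"
  unfolding perp_def using fd.span_base orth_span_right by blast

text \<open>Each vector of \<open>S\<close> imposes one linear condition, so \<open>S\<^sup>\<bottom>\<close> has codimension
  at most \<open>|S|\<close>.\<close>
lemma perp_codim: "finite S \<Longrightarrow> fd.dim (UNIV :: 'v set) \<le> fd.dim (perp B S) + card S"
proof (induction S rule: finite_induct)
  case empty
  then show ?case by (simp add: perp_def)
next
  case (insert a S)
  let ?U = "perp B S" and ?W = "perp B (insert a S)"
  have W: "?W = ?U \<inter> {x. B x a = 0}" by (auto simp: perp_def)
  have "fd.dim ?U \<le> fd.dim ?W + 1"
  proof (cases "\<exists>u\<in>?U. B u a \<noteq> 0")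
    case False
    then have "?W = ?U" using W by auto
    then show ?thesis by simp
  next
    case True
    then obtain u where u: "u \<in> ?U" "B u a \<noteq> 0" by blast
    have "?U \<subseteq> fd.span (insert u ?W)"
    proof
      fix x assume x: "x \<in> ?U"
      define c where "c = B x a / B u a"
      have "x - scale c u \<in> ?U"
        using x u perp_subspace[of S] fd.subspace_diff fd.subspace_scale by blast
      moreover have "B (x - scale c u) a = 0" using u by (simp add: diff_left scale_left c_def)
      ultimately have "x - scale c u \<in> ?W" using W by auto
      then show "x \<in> fd.span (insert u ?W)"
        by (metis diff_add_cancel fd.span_add fd.span_base fd.span_scale insertI1 insertI2)
    qed
    then have "fd.dim ?U \<le> fd.dim (insert u ?W)" by (rule fd.dim_mono)
    also have "\<dots> \<le> fd.dim ?W + 1" by (simp add: fd.dim_insert)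
    finally show ?thesis .
  qed
  then show ?case using insert by simp
qed

lemma orth_complement:
  assumes W: "fd.subspace W" and nondeg: "W \<inter> perp B W = {0}"
  shows "{x + y | x y. x \<in> W \<and> y \<in> perp B W} = UNIV"
proof -
  let ?S = "{x + y | x y. x \<in> W \<and> y \<in> perp B W}"
  obtain A where A: "A \<subseteq> W" "fd.independent A" "W \<subseteq> fd.span A" "card A = fd.dim W"
    using fd.basis_exists by blast
  have "fd.span A = W" using A W by (simp add: fd.span_subspace)
  then have perpA: "perp B W = perp B A" using perp_span by metis
  have "fd.dim (UNIV :: 'v set) \<le> fd.dim (perp B W) + fd.dim W"
    using perp_codim[of A] A(2,4) perpA fd.finiteI_independent by simp
  also have "\<dots> = fd.dim ?S"
    using fd.dim_sums_Int[OF W perp_subspace[of W]] nondeg by (simp add: add.commute)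
  finally show ?thesis
    using fd.subspace_dim_equal[of ?S UNIV] fd.subspace_sums[OF W perp_subspace] by auto
qed

lemma triangular_pairing:
  fixes key :: "'i \<Rightarrow> 'o::linorder"
  assumes fin: "finite I"
    and diag: "\<And>j. j \<in> I \<Longrightarrow> B (f j) (h j) \<noteq> 0"
    and low: "\<And>i j. i \<in> I \<Longrightarrow> j \<in> I \<Longrightarrow> i \<noteq> j \<Longrightarrow> key j \<le> key i \<Longrightarrow> B (f i) (h j) = 0"
    and orth: "\<And>j. j \<in> I \<Longrightarrow> B (\<Sum>i\<in>I. scale (c i) (f i)) (h j) = 0"
  shows "\<forall>i\<in>I. c i = 0"
proof (rule ccontr)
  let ?Z = "{i \<in> I. c i \<noteq> 0}"
  assume "\<not> (\<forall>i\<in>I. c i = 0)"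
  then have Z: "?Z \<noteq> {}" "finite ?Z" using fin by auto
  have "Min (key ` ?Z) \<in> key ` ?Z" using Z by (intro Min_in) auto
  then obtain j where j: "j \<in> ?Z" "Min (key ` ?Z) = key j" by blast
  have minimal: "key j \<le> key i" if "i \<in> ?Z" for i
    using j(2) Min_le[of "key ` ?Z" "key i"] Z that by simp
  have "c i * B (f i) (h j) = 0" if "i \<in> I - {j}" for i
    using that minimal low[of i j] j(1) by (cases "c i = 0") auto
  then have "(\<Sum>i\<in>I - {j}. c i * B (f i) (h j)) = 0" by (intro sum.neutral) blast
  moreover have "(\<Sum>i\<in>I. c i * B (f i) (h j))
      = c j * B (f j) (h j) + (\<Sum>i\<in>I - {j}. c i * B (f i) (h j))"
    using fin j(1) by (intro sum.remove) auto
  ultimately have "c j * B (f j) (h j) = 0" using orth[of j] j(1) by (simp add: sum_left)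
  then show False using diag[of j] j(1) by simp
qed

end

locale eps_isometry = eps_form scale Basis B \<epsilon>
  for scale :: "'k::field \<Rightarrow> 'v::ab_group_add \<Rightarrow> 'v" and Basis B \<epsilon> +
  fixes g :: "'v \<Rightarrow> 'v"
  assumes g_linear: "Vector_Spaces.linear scale scale g"
    and g_bij: "bij g"
    and g_iso: "B (g x) (g y) = B x y"
begin

sublocale g_hom: module_hom scale scale g
  using g_linear by (simp add: module_hom_iff_linear)

lemma g_inv [simp]: "g (inv g x) = x"
  using g_bij by (simp add: bij_is_surj surj_f_inv_f)

lemma inv_g [simp]: "inv g (g x) = x"
  using g_bij by (simp add: bij_is_inj)

lemma gpow_0 [simp]: "gpow g 0 x = x"
  by (simp add: gpow_def)

lemma gpow_of_nat: "gpow g (int n) x = (g ^^ n) x"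
  by (simp add: gpow_def)

lemma gpow_succ: "gpow g (i + 1) x = g (gpow g i x)"
proof (cases "0 \<le> i")
  case True
  then have "nat (i + 1) = Suc (nat i)" by simp
  then show ?thesis using True by (simp add: gpow_def)
next
  case False
  then have "nat (- i) = Suc (nat (- (i + 1)))" by simp
  then show ?thesis using False by (cases "i + 1 = 0") (auto simp: gpow_def)
qed

lemma gpow_pred: "gpow g (i - 1) x = inv g (gpow g i x)"
  using gpow_succ[of "i - 1" x] inv_g by simp

lemma gpow_add: "gpow g (i + j) x = gpow g i (gpow g j x)"
proof (induction i rule: int_induct[where k = 0])
  case (step1 i)
  then show ?case using gpow_succ[of "i + j"] gpow_succ[of i] by (simp add: ac_simps)
next
  case (step2 i)
  then show ?case using gpow_pred[of "i + j"] gpow_pred[of i] by (simp add: algebra_simps)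
qed simp

lemma gpow_iso: "B (gpow g i x) (gpow g i y) = B x y"
proof (induction i rule: int_induct[where k = 0])
  case (step2 i)
  then show ?case using g_iso[of "inv g (gpow g i x)" "inv g (gpow g i y)"] by (simp add: gpow_pred)
qed (simp_all add: gpow_succ g_iso)

lemma gpow_pair: "B (gpow g a x) (gpow g b y) = B (gpow g (a - b) x) y"
  using gpow_iso[of "- b" "gpow g a x" "gpow g b y"] by (simp flip: gpow_add)

definition N :: "'v \<Rightarrow> 'v" where "N x = g x - x"

definition N_adj :: "'v \<Rightarrow> 'v" where "N_adj x = inv g x - x"

lemma N_linear: "Vector_Spaces.linear scale scale N"
  unfolding module_hom_iff_linear[symmetric] module_hom_iff
  by (simp add: N_def fd.module_axioms g_hom.add g_hom.scale fd.scale_right_diff_distrib)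

lemma chain_span_g_N: "fd.span {(g ^^ l) x | l. l < m} = fd.span {(N ^^ l) x | l. l < m}"
proof (rule fd.chain_span_eq[OF g_linear _ N_linear])
  fix y
  have "g y = N y + y" by (simp add: N_def)
  then show "g y \<in> fd.span {N y, y}" by (simp add: fd.span_add fd.span_base)
  have "N y = g y - y" by (simp add: N_def)
  then show "N y \<in> fd.span {g y, y}" by (simp add: fd.span_diff fd.span_base)
qed

lemma stable_of_N_stable:
  assumes W: "fd.subspace W" and st: "N ` W \<subseteq> W"
  shows "g ` W \<subseteq> W"
proof clarify
  fix y assume "y \<in> W"
  then have "N y + y \<in> W" using st fd.subspace_add[OF W] by blast
  then show "g y \<in> W" by (simp add: N_def)
qed

lemma adjoint_pow: "B ((N ^^ m) x) z = B x ((N_adj ^^ m) z)"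
proof (induction m arbitrary: z)
  case (Suc m)
  have "B (N y) z = B y (N_adj z)" for y
    using g_iso[of y "inv g z"] by (simp add: N_def N_adj_def diff_left diff_right)
  then have "B ((N ^^ Suc m) x) z = B x ((N_adj ^^ m) (N_adj z))" by (simp add: Suc.IH)
  then show ?case by (simp only: funpow_Suc_right o_apply)
qed simp

text \<open>A \<open>g\<close>-stable subspace is mapped onto itself, hence stable under \<open>g\<^sup>-\<^sup>1\<close>, all
  powers of \<open>g\<close>, and \<open>N\<^sup>*\<close>.\<close>
lemma stable_image_eq:
  assumes W: "fd.subspace W" and st: "g ` W \<subseteq> W"
  shows "g ` W = W"
proof -
  interpret pair: finite_dimensional_vector_space_pair_1 scale Basis scale
    by unfold_locales
  have "inj_on g (fd.span W)" using g_bij bij_is_inj inj_on_subset by blast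
  then have "fd.dim (g ` W) = fd.dim W" by (rule pair.dim_image_eq[OF g_linear])
  then show ?thesis
    using fd.subspace_dim_equal[OF g_hom.subspace_image[OF W] W st] by simp
qed

lemma stable_closed:
  assumes W: "fd.subspace W" and st: "g ` W \<subseteq> W" and z: "z \<in> W"
  shows "gpow g i z \<in> W" and "(N_adj ^^ m) z \<in> W"
proof -
  have inv_st: "inv g y \<in> W" if "y \<in> W" for y
    using that stable_image_eq[OF W st] by (metis imageE inv_g)
  show "gpow g i z \<in> W"
  proof (induction i rule: int_induct[where k = 0])
    case (step1 i)
    then show ?case using st by (auto simp: gpow_succ)
  next
    case (step2 i)
    then show ?case using inv_st by (simp add: gpow_pred)
  qed (simp add: z)
  show "(N_adj ^^ m) z \<in> W"
    by (induction m) (auto simp: z N_adj_def inv_st fd.subspace_diff[OF W])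
qed

end

lemma Lam_pos: "\<kappa> \<le> 1 \<Longrightarrow> 1 \<le> k \<Longrightarrow> Lam p \<sigma> \<kappa> k = (\<Sum>r\<in>{1..\<sigma>}. 2 * p r - k)"
  by (simp add: Lam_def)

lemma Lam_zero: "Lam p \<sigma> \<kappa> 0 = 2 * (\<Sum>r\<in>{1..\<sigma>}. p r) + \<kappa>"
  by (simp add: Lam_def sum_distrib_left)

text \<open>The situation of the theorem: vectors \<open>v\<^sub>1, \<dots>, v\<^sub>\<sigma>\<close> (and \<open>v\<^sub>\<sigma>\<^sub>+\<^sub>1\<close> if \<open>\<kappa> = 1\<close>) with the
  orthogonality relations of the context, the last vector being orthogonal to the earlier
  ones exactly as a further \<open>v\<^sub>r\<close> would be.\<close>
locale adapted_vectors = eps_isometry scale Basis B \<epsilon> g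
  for scale :: "'k::field \<Rightarrow> 'v::ab_group_add \<Rightarrow> 'v" and Basis B \<epsilon> g +
  fixes v :: "nat \<Rightarrow> 'v" and p :: "nat \<Rightarrow> nat" and \<sigma> \<kappa> :: nat
  assumes p_pos: "r \<in> {1..\<sigma>} \<Longrightarrow> 1 \<le> p r"
    and p_mono: "r \<in> {1..\<sigma>} \<Longrightarrow> r' \<in> {1..\<sigma>} \<Longrightarrow> r \<le> r' \<Longrightarrow> p r' \<le> p r"
    and kappa: "\<kappa> \<le> 1"
    and v_orth: "1 \<le> t \<Longrightarrow> t < r \<Longrightarrow> r \<le> \<sigma> + \<kappa> \<Longrightarrow> - int (p t) \<le> i \<Longrightarrow> i < int (p t)
      \<Longrightarrow> B (gpow g i (v t)) (v r) = 0"
    and v_self: "r \<in> {1..\<sigma>} \<Longrightarrow> \<bar>i\<bar> < int (p r) \<Longrightarrow> B (v r) (gpow g i (v r)) = 0"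
    and v_unit: "r \<in> {1..\<sigma>} \<Longrightarrow> B (v r) ((g ^^ p r) (v r)) = 1"
begin

lemma orth_relations:
  assumes t: "t \<in> {1..\<sigma>}" and r: "r \<in> {1..\<sigma>}"
    and d: "(t < r \<and> - int (p t) \<le> d \<and> d < int (p t)) \<or> (t = r \<and> \<bar>d\<bar> < int (p t))
      \<or> (r < t \<and> - int (p r) < d \<and> d \<le> int (p r))"
  shows "B (gpow g d (v t)) (v r) = 0"
  using d
proof (elim disjE conjE)
  assume "t < r" "- int (p t) \<le> d" "d < int (p t)"
  then show ?thesis using v_orth t r by auto
next
  assume "t = r" "\<bar>d\<bar> < int (p t)"
  then show ?thesis using gpow_pair[of 0 "v t" "- d" "v t"] v_self[of t "- d"] t by simp
next
  assume "r < t" "- int (p r) < d" "d \<le> int (p r)"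
  then have "B (gpow g (- d) (v r)) (v t) = 0" using v_orth r t by auto
  then show ?thesis using gpow_pair[of 0 "v r" d "v t"] orth_sym by simp
qed

text \<open>Each
  \<open>e j\<close> pairs nontrivially with its partner \<open>e (dual j)\<close>, obtained by shifting \<open>s\<close> by
  \<open>\<plusminus>p\<^sub>t\<close>, and \<open>key\<close> orders the indices so that the pairing matrix is triangular:
  first the lower halves \<open>s < p\<^sub>t\<close> by increasing \<open>s\<close> and decreasing \<open>t\<close>, then the upper
  halves by decreasing \<open>s - p\<^sub>t\<close> and increasing \<open>t\<close>.\<close>
definition Idx :: "(nat \<times> nat) set" where
  "Idx = Sigma {1..\<sigma>} (\<lambda>t. {..<2 * p t})"

definition e :: "nat \<times> nat \<Rightarrow> 'v" where
  "e j = gpow g (int (snd j) - int (p (fst j))) (v (fst j))"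

definition dual :: "nat \<times> nat \<Rightarrow> nat \<times> nat" where
  "dual j = (fst j, if snd j < p (fst j) then snd j + p (fst j) else snd j - p (fst j))"

definition key :: "nat \<times> nat \<Rightarrow> int \<times> int \<times> int" where
  "key j = (if snd j < p (fst j) then (0, int (snd j), - int (fst j))
            else (1, int (p (fst j)) - int (snd j), int (fst j)))"

lemma e_pair: "e (t, s) = gpow g (int s - int (p t)) (v t)"
  by (simp add: e_def)

lemma Idx_finite: "finite Idx"
  by (simp add: Idx_def)

lemma e_dual:
  assumes "b < 2 * p r"
  shows "e (dual (r, b)) = gpow g (if b < p r then int b else int b - 2 * int (p r)) (v r)"
  using assms by (simp add: dual_def e_pair of_nat_diff)

text \<open>Triangularity of the pairing: \<open>B (e i) (e (dual j))\<close> reduces to a pairing of \<open>g\<^sup>d v\<^sub>t\<close>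
  with \<open>v\<^sub>r\<close>, and \<open>key j \<le> key i\<close> places \<open>d\<close> in the range covered by \<open>orth_relations\<close>.\<close>
lemma pairing_triangular:
  assumes i: "i \<in> Idx" and j: "j \<in> Idx" and ne: "i \<noteq> j" and le: "key j \<le> key i"
  shows "B (e i) (e (dual j)) = 0"
proof -
  obtain t a r b where ij: "i = (t, a)" "j = (r, b)" by (cases i, cases j)
  have t: "t \<in> {1..\<sigma>}" "a < 2 * p t" and r: "r \<in> {1..\<sigma>}" "b < 2 * p r"
    using i j by (auto simp: Idx_def ij)
  have mono: "t < r \<Longrightarrow> p r \<le> p t" "r < t \<Longrightarrow> p t \<le> p r" using p_mono t r by auto
  define y where "y = (if b < p r then int b else int b - 2 * int (p r))"
  have "e (dual j) = gpow g y (v r)" using e_dual[OF r(2)] by (simp add: ij y_def)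
  then have "B (e i) (e (dual j)) = B (gpow g (int a - int (p t) - y) (v t)) (v r)"
    by (simp add: ij e_pair gpow_pair)
  also have "\<dots> = 0"
    using le ne t r mono p_pos[OF t(1)] p_pos[OF r(1)]
    by (intro orth_relations[OF t(1) r(1)], cases rule: linorder_cases[of t r])
      (auto simp: key_def ij y_def split: if_split_asm)
  finally show ?thesis .
qed

lemma pairing_diagonal:
  assumes j: "j \<in> Idx"
  shows "B (e j) (e (dual j)) \<noteq> 0"
proof -
  obtain r b where j': "j = (r, b)" by (cases j)
  have r: "r \<in> {1..\<sigma>}" "b < 2 * p r" using j by (auto simp: Idx_def j')
  have below: "B (gpow g (- int (p r)) (v r)) (v r) = 1"
    using v_unit[OF r(1)] gpow_pair[of 0 "v r" "int (p r)" "v r"] by (simp add: gpow_of_nat)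
  have above: "B (gpow g (int (p r)) (v r)) (v r) = \<epsilon>"
    using v_unit[OF r(1)] eps_sym[of "gpow g (int (p r)) (v r)" "v r"] by (simp add: gpow_of_nat)
  show ?thesis
  proof (cases "b < p r")
    case True
    then show ?thesis using below e_dual[OF r(2)] by (simp add: j' e_pair gpow_pair)
  next
    case False
    then show ?thesis using above eps e_dual[OF r(2)] by (auto simp: j' e_pair gpow_pair)
  qed
qed

lemma coefficients_vanish:
  assumes J: "J \<subseteq> Idx"
    and orth: "\<And>j. j \<in> J \<Longrightarrow> B (\<Sum>i\<in>J. scale (c i) (e i)) (e (dual j)) = 0"
  shows "\<forall>i\<in>J. c i = 0"
proof (rule triangular_pairing[where key = key])
  show "finite J" using finite_subset[OF J Idx_finite] .
qed (use J pairing_diagonal pairing_triangular orth in blast)+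

lemma e_inj: "inj_on e Idx" and e_independent: "fd.independent (e ` Idx)"
  using coefficients_vanish[OF order_refl]
  by (auto intro!: fd.independent_family[OF Idx_finite])

lemma nondegenerate:
  assumes J: "J \<subseteq> Idx" and x: "x \<in> fd.span (e ` J)"
    and orth: "\<And>j. j \<in> J \<Longrightarrow> B x (e (dual j)) = 0"
  shows "x = 0"
proof -
  obtain c where c: "x = (\<Sum>i\<in>J. scale (c i) (e i))"
    using fd.span_image_sum[OF finite_subset[OF J Idx_finite] inj_on_subset[OF e_inj J] x] .
  then have "\<forall>i\<in>J. c i = 0" using coefficients_vanish[OF J] orth by simp
  then show ?thesis using c by simp
qed

abbreviation X :: "nat \<Rightarrow> 'v set" where
  "X r \<equiv> Xsp scale g v p \<sigma> \<kappa> r"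

definition block :: "nat \<Rightarrow> (nat \<times> nat) set" where
  "block r = {r} \<times> {..<2 * p r}"

lemma block_Idx: "r \<in> {1..\<sigma>} \<Longrightarrow> block r \<subseteq> Idx"
  by (auto simp: block_def Idx_def)

lemma e_iterate: "(g ^^ l) (e (r, 0)) = e (r, l)"
  by (simp add: e_pair gpow_of_nat[symmetric] gpow_add[symmetric])

lemma X_span:
  assumes "r \<le> \<sigma>"
  shows "X r = fd.span (e ` block r)"
proof -
  let ?G = "{gpow g (i - int (p r)) (v r) | i. 0 \<le> i \<and> i \<le> 2 * int (p r) - 1}"
  have "?G = e ` block r"
  proof (intro equalityI subsetI)
    fix x assume "x \<in> ?G"
    then obtain i where "0 \<le> i" "i \<le> 2 * int (p r) - 1" "x = gpow g (i - int (p r)) (v r)"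
      by blast
    then show "x \<in> e ` block r" by (intro image_eqI[of _ _ "(r, nat i)"]) (auto simp: block_def e_pair)
  next
    fix x assume "x \<in> e ` block r"
    then obtain s where "s < 2 * p r" "x = e (r, s)" by (auto simp: block_def)
    then show "x \<in> ?G" by (auto simp: e_pair)
  qed
  then show ?thesis using assms by (simp add: Xsp_def)
qed

lemma X_chain:
  assumes "r \<le> \<sigma>"
  shows "X r = fd.span {(N ^^ l) (e (r, 0)) | l. l < 2 * p r}"
proof -
  have "e ` block r = {(g ^^ l) (e (r, 0)) | l. l < 2 * p r}"
    by (auto simp: block_def e_iterate)
  then show ?thesis using assms by (simp add: X_span chain_span_g_N)
qed

lemma e_X: "r \<le> \<sigma> \<Longrightarrow> j \<in> block r \<Longrightarrow> e j \<in> X r"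
  by (simp add: X_span fd.span_base)

lemma dual_block: "j \<in> block r \<Longrightarrow> dual j \<in> block r"
  by (auto simp: block_def dual_def)

lemma X_nondegenerate:
  assumes r: "r \<in> {1..\<sigma>}"
  shows "X r \<inter> perp B (X r) = {0}"
proof -
  have "x = 0" if x: "x \<in> X r" "x \<in> perp B (X r)" for x
  proof (rule nondegenerate[OF block_Idx[OF r]])
    show "x \<in> fd.span (e ` block r)" using x r X_span by simp
    fix j assume "j \<in> block r"
    then have "e (dual j) \<in> X r" using r by (simp add: dual_block e_X)
    then show "B x (e (dual j)) = 0" using x by (simp add: perp_def)
  qed
  moreover have "0 \<in> perp B (X r)" by (simp add: perp_def)
  ultimately show ?thesis using r X_span fd.span_zero by auto
qed

lemma X_complement:
  assumes r: "r \<in> {1..\<sigma>}"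
  shows "{x + y | x y. x \<in> X r \<and> y \<in> perp B (X r)} = UNIV"
  using orth_complement[OF _ X_nondegenerate[OF r]] r X_span by simp

definition chain :: "nat \<times> nat \<Rightarrow> 'v" where
  "chain j = (N ^^ snd j) (e (fst j, 0))"

lemma chain_X: "(t, s) \<in> Idx \<Longrightarrow> chain (t, s) \<in> X t"
  by (auto simp: Idx_def chain_def X_chain intro: fd.span_base)

lemma chain_span: "fd.span (chain ` Idx) = fd.span (e ` Idx)"
proof -
  have "chain j \<in> fd.span (e ` Idx)" if jI: "j \<in> Idx" for j
  proof -
    obtain t s where j: "j = (t, s)" "t \<in> {1..\<sigma>}" using jI by (cases j) (auto simp: Idx_def)
    have "fd.span (e ` block t) \<subseteq> fd.span (e ` Idx)" using block_Idx[OF j(2)] by (intro fd.span_mono) auto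
    then show ?thesis using chain_X[of t s] X_span[of t] j jI by auto
  qed
  moreover have "e j \<in> fd.span (chain ` Idx)" if jI: "j \<in> Idx" for j
  proof -
    obtain t s where j: "j = (t, s)" "t \<in> {1..\<sigma>}" "s < 2 * p t"
      using jI by (cases j) (auto simp: Idx_def)
    have "{(N ^^ l) (e (t, 0)) | l. l < 2 * p t} \<subseteq> chain ` Idx"
      using j by (force simp: chain_def Idx_def intro: image_eqI[of _ _ "(t, _)"])
    then have "X t \<subseteq> fd.span (chain ` Idx)" using j X_chain[of t] fd.span_mono by simp
    then show ?thesis using e_X[of t j] j by (auto simp: block_def)
  qed
  ultimately show ?thesis unfolding fd.span_eq by blast
qed

lemma chain_inj: "inj_on chain Idx" and chain_independent: "fd.independent (chain ` Idx)"
  using fd.spanning_family_independent[OF Idx_finite e_inj e_independent chain_span] by auto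

definition F :: "nat \<Rightarrow> 'v set" where
  "F k = chain ` {j \<in> Idx. k \<le> snd j}"

lemma F_range: "F k \<subseteq> range (N ^^ k)"
proof
  fix z assume "z \<in> F k"
  then obtain t s where "k \<le> s" "z = (N ^^ s) (e (t, 0))" by (auto simp: F_def chain_def)
  moreover have "N ^^ s = (N ^^ k) \<circ> (N ^^ (s - k))"
    using \<open>k \<le> s\<close> by (metis funpow_add le_add_diff_inverse)
  ultimately have "z = (N ^^ k) ((N ^^ (s - k)) (e (t, 0)))" by simp
  then show "z \<in> range (N ^^ k)" by blast
qed

lemma F_independent: "fd.independent (F k)"
  by (rule fd.independent_mono[OF chain_independent]) (auto simp: F_def)

lemma F_card: "card (F k) = (\<Sum>t\<in>{1..\<sigma>}. 2 * p t - k)"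
proof -
  have "{j \<in> Idx. k \<le> snd j} = Sigma {1..\<sigma>} (\<lambda>t. {k..<2 * p t})" by (auto simp: Idx_def)
  moreover have "inj_on chain {j \<in> Idx. k \<le> snd j}" by (rule inj_on_subset[OF chain_inj]) auto
  ultimately show ?thesis by (simp add: F_def card_image)
qed

lemma dim_range_lower: "(\<Sum>t\<in>{1..\<sigma>}. 2 * p t - k) \<le> fd.dim (range (N ^^ k))"
  using fd.independent_card_le_dim[OF F_range F_independent] F_card by simp

lemma range_in_span_F:
  assumes "fd.dim (range (N ^^ k)) \<le> (\<Sum>t\<in>{1..\<sigma>}. 2 * p t - k)"
  shows "range (N ^^ k) \<subseteq> fd.span (F k)"
  by (rule fd.card_ge_dim_independent[OF F_range F_independent]) (use assms F_card in simp)

lemma X_subspace: "r \<le> \<sigma> \<Longrightarrow> fd.subspace (X r)"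
  by (simp add: X_span)

lemma X_last: "X (\<sigma> + 1) = (if \<kappa> = 0 then {0} else range (\<lambda>c. scale c (v (\<sigma> + 1))))"
  by (auto simp: Xsp_def)

lemma X_orth_v:
  assumes t: "t \<in> {1..\<sigma>}" and "t < r" "r \<le> \<sigma> + \<kappa>" and x: "x \<in> X t"
  shows "B x (v r) = 0"
proof (rule orth_span_left)
  show "x \<in> fd.span (e ` block t)" using x t X_span by simp
  fix y assume "y \<in> e ` block t"
  then obtain s where "s < 2 * p t" "y = e (t, s)" by (auto simp: block_def)
  then show "B y (v r) = 0" using assms v_orth by (simp add: e_pair)
qed

text \<open>If an earlier block \<open>X t\<close> is \<open>g\<close>-stable, it is orthogonal to the whole \<open>N\<close>-chain
  of \<open>e (r, 0)\<close>: move \<open>N\<^sup>m\<close> across as \<open>N\<^sup>*\<^sup>m\<close> and \<open>g\<^sup>-\<^sup>p\<^sup>r\<close> as \<open>g\<^sup>p\<^sup>r\<close>, which keep \<open>X t\<close>.\<close>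
lemma chain_orth_stable_block:
  assumes t: "t \<in> {1..\<sigma>}" "t < r" "r \<le> \<sigma>" and st: "g ` X t \<subseteq> X t" and z: "z \<in> X t"
  shows "B ((N ^^ m) (e (r, 0))) z = 0"
proof -
  have W: "fd.subspace (X t)" using t by (simp add: X_subspace)
  let ?z = "gpow g (int (p r)) ((N_adj ^^ m) z)"
  have "?z \<in> X t" using stable_closed[OF W st] z by blast
  then have "B ?z (v r) = 0" using X_orth_v[OF t(1) t(2)] t(3) by simp
  moreover have "B ((N ^^ m) (e (r, 0))) z = B (v r) ?z"
    using gpow_pair[of 0 "v r" "int (p r)" "(N_adj ^^ m) z"] by (simp add: adjoint_pow e_pair)
  ultimately show ?thesis using orth_sym by simp
qed

text \<open>Under the bound \<open>dim N\<^sup>2\<^sup>p\<^sup>r V \<le> \<Lambda>\<^sub>2\<^sub>p\<^sub>r\<close>, the top of the chain of \<open>e (r, 0)\<close> vanishes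
  once the earlier blocks are stable: it lies in their span and is orthogonal to them.\<close>
lemma chain_top_vanishes:
  assumes bound: "fd.dim (range (N ^^ (2 * p r))) \<le> (\<Sum>t\<in>{1..\<sigma>}. 2 * p t - 2 * p r)"
    and r: "r \<in> {1..\<sigma>}" and st: "\<And>t. t \<in> {1..\<sigma>} \<Longrightarrow> t < r \<Longrightarrow> g ` X t \<subseteq> X t"
  shows "(N ^^ (2 * p r)) (e (r, 0)) = 0"
proof (rule nondegenerate)
  let ?J = "{j \<in> Idx. fst j < r}"
  show "?J \<subseteq> Idx" by blast
  have "F (2 * p r) \<subseteq> fd.span (e ` ?J)"
  proof
    fix z assume "z \<in> F (2 * p r)"
    then obtain t s where ts: "(t, s) \<in> Idx" "2 * p r \<le> s" "z = chain (t, s)" by (auto simp: F_def)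
    then have t: "t \<in> {1..\<sigma>}" "t < r"
      using p_mono[OF r, of t] r by (auto simp: Idx_def not_less[symmetric])
    have "fd.span (e ` block t) \<subseteq> fd.span (e ` ?J)"
      using t block_Idx[OF t(1)] by (intro fd.span_mono) (auto simp: block_def)
    then show "z \<in> fd.span (e ` ?J)" using chain_X[OF ts(1)] X_span t ts(3) by auto
  qed
  then show "(N ^^ (2 * p r)) (e (r, 0)) \<in> fd.span (e ` ?J)"
    using range_in_span_F[OF bound] fd.span_mono[of "F (2 * p r)"] fd.span_span by blast
  fix j assume j: "j \<in> ?J"
  then obtain t where t: "t \<in> {1..\<sigma>}" "t < r" "j \<in> block t"
    by (cases j) (auto simp: Idx_def block_def)
  then have "e (dual j) \<in> X t" by (simp add: dual_block e_X)
  then show "B ((N ^^ (2 * p r)) (e (r, 0))) (e (dual j)) = 0"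
    using chain_orth_stable_block t st r by simp
qed

text \<open>Under the bounds \<open>dim N\<^sup>k V \<le> \<Lambda>\<^sub>k\<close>, \<open>k \<ge> 1\<close>: by induction on \<open>r\<close>, the chain of \<open>e (r, 0)\<close>
  stops after \<open>2 p\<^sub>r\<close> steps, so its span \<open>X r\<close> is \<open>N\<close>-stable and hence \<open>g\<close>-stable.\<close>
lemma X_stable:
  assumes bound: "\<And>k. 1 \<le> k \<Longrightarrow> fd.dim (range (N ^^ k)) \<le> (\<Sum>t\<in>{1..\<sigma>}. 2 * p t - k)"
    and r: "r \<in> {1..\<sigma>}"
  shows "g ` X r \<subseteq> X r"
  using r
proof (induction r rule: less_induct)
  case (less r)
  have "(N ^^ (2 * p r)) (e (r, 0)) = 0"
    by (rule chain_top_vanishes[OF bound less.prems]) (use p_pos[OF less.prems] less.IH in auto)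
  then have "N ` X r \<subseteq> X r"
    using fd.nilpotent_chain_stable[OF N_linear] X_chain less.prems by simp
  then show ?case using stable_of_N_stable X_subspace less.prems by auto
qed

text \<open>A \<open>g\<close>-stable block is orthogonal to every later block, which is spanned by an
  \<open>N\<close>-chain.\<close>
lemma X_orthogonal:
  assumes st: "g ` X t \<subseteq> X t" and t: "t \<in> {1..\<sigma>}" "t < r" "r \<le> \<sigma>"
    and x: "x \<in> X t" and y: "y \<in> X r"
  shows "B x y = 0"
proof -
  have "B y x = 0"
  proof (rule orth_span_left)
    show "y \<in> fd.span {(N ^^ l) (e (r, 0)) | l. l < 2 * p r}" using y t X_chain by simp
  qed (use chain_orth_stable_block[OF t st x] in blast)
  then show ?thesis using orth_sym by simp
qed

text \<open>When \<open>\<kappa> = 1\<close>, the bound for \<open>k = 1\<close> forces \<open>g\<close> to fix \<open>v (\<sigma> + 1)\<close>: \<open>N v (\<sigma> + 1)\<close> lies in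
  the span of the blocks and is orthogonal to them.\<close>
lemma last_fixed:
  assumes \<kappa>: "\<kappa> = 1"
    and bound: "fd.dim (range (N ^^ 1)) \<le> (\<Sum>t\<in>{1..\<sigma>}. 2 * p t - 1)"
    and st: "\<And>t. t \<in> {1..\<sigma>} \<Longrightarrow> g ` X t \<subseteq> X t"
  shows "g (v (\<sigma> + 1)) = v (\<sigma> + 1)"
proof -
  let ?w = "v (\<sigma> + 1)"
  have "N ?w = 0"
  proof (rule nondegenerate[OF order_refl])
    have "F 1 \<subseteq> chain ` Idx" by (auto simp: F_def)
    then have "fd.span (F 1) \<subseteq> fd.span (e ` Idx)" using chain_span fd.span_mono by metis
    then show "N ?w \<in> fd.span (e ` Idx)" using range_in_span_F[OF bound] by auto
    fix j assume "j \<in> Idx"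
    then obtain t where t: "t \<in> {1..\<sigma>}" "j \<in> block t" by (cases j) (auto simp: Idx_def block_def)
    then have "e (dual j) \<in> X t" by (simp add: dual_block e_X)
    moreover have "fd.subspace (X t)" using t X_subspace by simp
    ultimately have "(N_adj ^^ 1) (e (dual j)) \<in> X t" using stable_closed(2) st t by blast
    then have "B ((N_adj ^^ 1) (e (dual j))) ?w = 0" using X_orth_v[OF t(1), of "\<sigma> + 1"] \<kappa> t by simp
    then show "B (N ?w) (e (dual j)) = 0" using adjoint_pow[of 1] orth_sym by simp
  qed
  then show ?thesis by (simp add: N_def)
qed

text \<open>The last block is \<open>0\<close> or the line through \<open>v (\<sigma> + 1)\<close>, which is orthogonal to the others.\<close>
lemma blocks_stable:
  assumes bound: "\<And>k. 1 \<le> k \<Longrightarrow> fd.dim (range (N ^^ k)) \<le> (\<Sum>t\<in>{1..\<sigma>}. 2 * p t - k)"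
    and r: "r \<in> {1..\<sigma> + 1}"
  shows "g ` X r \<subseteq> X r"
proof (cases "r \<le> \<sigma>")
  case True
  then show ?thesis using X_stable[OF bound] r by simp
next
  case False
  then have "r = \<sigma> + 1" using r by simp
  moreover have "g (v (\<sigma> + 1)) = v (\<sigma> + 1)" if "\<kappa> = 1"
    using last_fixed[OF that bound] X_stable[OF bound] by simp
  ultimately show ?thesis using kappa X_last by (auto simp: g_hom.scale)
qed

lemma blocks_orthogonal_less:
  assumes bound: "\<And>k. 1 \<le> k \<Longrightarrow> fd.dim (range (N ^^ k)) \<le> (\<Sum>t\<in>{1..\<sigma>}. 2 * p t - k)"
    and r: "1 \<le> r" "r < r'" "r' \<le> \<sigma> + 1" and x: "x \<in> X r" and y: "y \<in> X r'"
  shows "B x y = 0"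
proof (cases "r' \<le> \<sigma>")
  case True
  then show ?thesis using X_orthogonal X_stable[OF bound] r x y by simp
next
  case False
  then have "r' = \<sigma> + 1" "r \<in> {1..\<sigma>}" using r by auto
  moreover have "B x (v (\<sigma> + 1)) = 0" if "\<kappa> = 1" using X_orth_v that r x by simp
  ultimately show ?thesis using y X_last kappa by (auto simp: scale_right split: if_splits)
qed

lemma blocks_orthogonal:
  assumes bound: "\<And>k. 1 \<le> k \<Longrightarrow> fd.dim (range (N ^^ k)) \<le> (\<Sum>t\<in>{1..\<sigma>}. 2 * p t - k)"
    and r: "r \<in> {1..\<sigma> + 1}" "r' \<in> {1..\<sigma> + 1}" "r \<noteq> r'" and x: "x \<in> X r" and y: "y \<in> X r'"
  shows "B x y = 0"
proof (cases "r < r'")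
  case True
  then show ?thesis using blocks_orthogonal_less[OF bound _ True _ x y] r by simp
next
  case False
  then have "B y x = 0" using blocks_orthogonal_less[OF bound _ _ _ y x] r by simp
  then show ?thesis using orth_sym by simp
qed

lemma blocks_stable_orthogonal:
  assumes "\<forall>k. fd.dim (range (N ^^ k)) = Lam p \<sigma> \<kappa> k"
  shows "(\<forall>r\<in>{1..\<sigma>+1}. g ` X r \<subseteq> X r)
    \<and> (\<forall>r\<in>{1..\<sigma>+1}. \<forall>r'\<in>{1..\<sigma>+1}. r \<noteq> r' \<longrightarrow> (\<forall>x\<in>X r. \<forall>y\<in>X r'. B x y = 0))"
proof -
  have bound: "fd.dim (range (N ^^ k)) \<le> (\<Sum>t\<in>{1..\<sigma>}. 2 * p t - k)" if "1 \<le> k" for k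
    using assms Lam_pos[OF kappa that] by simp
  show ?thesis using blocks_stable[OF bound] blocks_orthogonal[OF bound] by blast
qed

end

lemma finite_dimensional_of_dim:
  assumes vs: "vector_space scale" and dim: "vector_space.dim scale (UNIV :: 'v set) = n" and n: "0 < n"
  obtains Basis :: "'v::ab_group_add set"
  where "finite_dimensional_vector_space (scale :: 'k::field \<Rightarrow> 'v \<Rightarrow> 'v) Basis"
proof -
  interpret vector_space scale by (rule vs)
  have ex: "\<exists>b. independent b \<and> span b = span (UNIV :: 'v set)"
    using dim n unfolding dim_def by (auto split: if_splits)
  define Basis where "Basis = (SOME b. independent b \<and> span b = span (UNIV :: 'v set))"
  have Basis: "independent Basis" "span Basis = span UNIV"
    unfolding Basis_def using someI_ex[OF ex] by auto
  have "card Basis = n" using dim ex unfolding dim_def Basis_def by simp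
  then have "finite Basis" using n card.infinite by force
  then show ?thesis
    using vs Basis by (intro that) (simp add: finite_dimensional_vector_space_def
        finite_dimensional_vector_space_axioms_def)
qed

text \<open>In both cases of the paper the form is \<open>\<epsilon>\<close>-symmetric: alternating (\<open>\<epsilon> = -1\<close>) when
  \<open>Q = 0\<close>, and symmetric (\<open>\<epsilon> = 1\<close>) when it is the polarisation of \<open>Q\<close>.\<close>
lemma form_conditions_eps_sym:
  assumes "form_conditions scale B Q"
  obtains \<epsilon> :: "'k::field" where "\<epsilon> = 1 \<or> \<epsilon> = -1" and "\<And>x y. B y x = \<epsilon> * B x y"
proof -
  have add_left: "\<And>x y z. B (x + y) z = B x z + B y z"
    and add_right: "\<And>x y z. B x (y + z) = B x y + B x z"
    and cases: "(\<forall>x. B x x = 0) \<or> (\<forall>x y. B x y = Q (x + y) - Q x - Q y)"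
    using assms unfolding form_conditions_def by blast+
  from cases show ?thesis
  proof
    assume alt: "\<forall>x. B x x = 0"
    have anti: "B y x = - 1 * B x y" for x y
    proof -
      have "B (x + y) (x + y) = B x x + B x y + (B y x + B y y)" by (simp add: add_left add_right)
      then have "B x y + B y x = 0" using alt by simp
      then show ?thesis by (simp add: add_eq_0_iff2)
    qed
    show ?thesis by (rule that[OF _ anti]) simp
  next
    assume "\<forall>x y. B x y = Q (x + y) - Q x - Q y"
    then have sym: "B y x = 1 * B x y" for x y by (simp add: add.commute)
    show ?thesis by (rule that[OF _ sym]) simp
  qed
qed

lemma adapted_vectorsI:
  fixes scale :: "'k::field \<Rightarrow> 'v::ab_group_add \<Rightarrow> 'v"
  assumes fd: "finite_dimensional_vector_space scale Basis"
    and eps: "\<epsilon> = 1 \<or> \<epsilon> = -1" and eps_sym: "\<And>x y. B y x = \<epsilon> * B x y"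
    and form: "form_conditions scale B Q" and iso: "isometry scale B Q g"
    and p_pos: "\<forall>r\<in>{1..\<sigma>}. 1 \<le> p r"
    and p_mono: "\<forall>r\<in>{1..\<sigma>}. \<forall>r'\<in>{1..\<sigma>}. r \<le> r' \<longrightarrow> p r' \<le> p r"
    and kappa: "\<kappa> \<le> 1"
    and v_orth: "\<forall>t r. 1 \<le> t \<and> t < r \<and> r \<le> \<sigma> \<longrightarrow>
        (\<forall>i::int. - int (p t) \<le> i \<and> i \<le> int (p t) - 1 \<longrightarrow> B (gpow g i (v t)) (v r) = 0)"
    and v_self: "\<forall>r\<in>{1..\<sigma>}. (\<forall>i::int. \<bar>i\<bar> \<le> int (p r) - 1 \<longrightarrow> B (v r) (gpow g i (v r)) = 0)
        \<and> Q (v r) = 0 \<and> B (v r) ((g ^^ p r) (v r)) = 1"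
    and v_last: "\<kappa> = 1 \<longrightarrow>
        (\<forall>t\<in>{1..\<sigma>}. \<forall>i::int. - int (p t) \<le> i \<and> i \<le> int (p t) - 1 \<longrightarrow>
            B (gpow g i (v t)) (v (\<sigma> + 1)) = 0) \<and> Q (v (\<sigma> + 1)) = 1"
  shows "adapted_vectors scale Basis B \<epsilon> g v p \<sigma> \<kappa>"
proof -
  have bilinear: "\<forall>x y z. B (x + y) z = B x z + B y z" "\<forall>x y z. B x (y + z) = B x y + B x z"
    "\<forall>c x y. B (scale c x) y = c * B x y" "\<forall>c x y. B x (scale c y) = c * B x y"
    using form unfolding form_conditions_def by blast+
  show ?thesis
  proof (intro adapted_vectors.intro eps_isometry.intro eps_form.intro fd
      eps_form_axioms.intro eps_isometry_axioms.intro adapted_vectors_axioms.intro)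
    show "B (gpow g i (v t)) (v r) = 0"
      if "1 \<le> t" "t < r" "r \<le> \<sigma> + \<kappa>" "- int (p t) \<le> i" "i < int (p t)" for t r i
    proof (cases "r \<le> \<sigma>")
      case True
      then show ?thesis using v_orth that by auto
    next
      case False
      then have "r = \<sigma> + 1" "\<kappa> = 1" using kappa that(3) by auto
      then show ?thesis using v_last that by auto
    qed
    show "B y x = \<epsilon> * B x y" for x y by (rule eps_sym)
  qed (use bilinear iso eps p_pos p_mono kappa v_self in \<open>auto simp: isometry_def\<close>)
qed

theorem mainTheorem6:
  fixes scale :: "'k::field \<Rightarrow> 'v::ab_group_add \<Rightarrow> 'v"
    and B :: "'v \<Rightarrow> 'v \<Rightarrow> 'k" and Q :: "'v \<Rightarrow> 'k"
    and nn \<kappa> n \<sigma> :: nat and p :: "nat \<Rightarrow> nat"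
    and V V' :: "nat \<Rightarrow> 'v set" and g :: "'v \<Rightarrow> 'v" and v :: "nat \<Rightarrow> 'v"
  assumes alg_closed: "\<forall>q::'k poly. 0 < degree q \<longrightarrow> (\<exists>x. poly q x = 0)"
    and vs: "vector_space scale"
    and dimV: "vector_space.dim scale (UNIV :: 'v set) = nn"
    and nn3: "3 \<le> nn"
    and kappa: "\<kappa> = nn mod 2"
    and n_def: "n = nn div 2"
    and form: "form_conditions scale B Q"
    and p_pos: "\<forall>r\<in>{1..\<sigma>}. 1 \<le> p r"
    and p_mono: "\<forall>r\<in>{1..\<sigma>}. \<forall>r'\<in>{1..\<sigma>}. r \<le> r' \<longrightarrow> p r' \<le> p r"
    and p_sum: "(\<Sum>r\<in>{1..\<sigma>}. p r) = n"
    and flagV: "is_flag scale B Q nn V"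
    and flagV': "is_flag scale B Q nn V'"
    and relpos: "rel_pos_eq nn V V' (wperm nn p)"
    and g_iso: "isometry scale B Q g"
    and gV: "\<forall>i\<le>nn. g ` V i = V' i"
    and v_span: "\<forall>r\<in>{1..\<sigma>}. \<forall>i\<le>p r. V (plt p r + i) =
        module.span scale ({(g ^^ j) (v t) | t j. 1 \<le> t \<and> t < r \<and> j < p t}
                           \<union> {(g ^^ j) (v r) | j. j < i})"
    and v_orth: "\<forall>t r. 1 \<le> t \<and> t < r \<and> r \<le> \<sigma> \<longrightarrow>
        (\<forall>i::int. - int (p t) \<le> i \<and> i \<le> int (p t) - 1 \<longrightarrow> B (gpow g i (v t)) (v r) = 0)"
    and v_self: "\<forall>r\<in>{1..\<sigma>}. (\<forall>i::int. \<bar>i\<bar> \<le> int (p r) - 1 \<longrightarrow> B (v r) (gpow g i (v r)) = 0)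
        \<and> Q (v r) = 0 \<and> B (v r) ((g ^^ p r) (v r)) = 1"
    and v_last: "\<kappa> = 1 \<longrightarrow>
        (\<forall>t\<in>{1..\<sigma>}. \<forall>i::int. - int (p t) \<le> i \<and> i \<le> int (p t) - 1 \<longrightarrow>
            B (gpow g i (v t)) (v (\<sigma> + 1)) = 0) \<and> Q (v (\<sigma> + 1)) = 1"
  shows
    "(\<forall>r\<in>{1..\<sigma>}.
        {x + y | x y. x \<in> Xsp scale g v p \<sigma> \<kappa> r \<and> y \<in> perp B (Xsp scale g v p \<sigma> \<kappa> r)} = UNIV
      \<and> Xsp scale g v p \<sigma> \<kappa> r \<inter> perp B (Xsp scale g v p \<sigma> \<kappa> r) = {0})
   \<and> (unipotent g \<longrightarrow>
        (\<forall>k. Lam p \<sigma> \<kappa> k \<le> vector_space.dim scale (range ((\<lambda>x. g x - x) ^^ k)))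
      \<and> vector_space.dim scale (range ((\<lambda>x. g x - x) ^^ 0)) = Lam p \<sigma> \<kappa> 0)
   \<and> (unipotent g \<and> (\<forall>k. vector_space.dim scale (range ((\<lambda>x. g x - x) ^^ k)) = Lam p \<sigma> \<kappa> k) \<longrightarrow>
        (\<forall>r\<in>{1..\<sigma>+1}. g ` Xsp scale g v p \<sigma> \<kappa> r \<subseteq> Xsp scale g v p \<sigma> \<kappa> r)
      \<and> (\<forall>r\<in>{1..\<sigma>+1}. \<forall>r'\<in>{1..\<sigma>+1}. r \<noteq> r' \<longrightarrow>
           (\<forall>x\<in>Xsp scale g v p \<sigma> \<kappa> r. \<forall>y\<in>Xsp scale g v p \<sigma> \<kappa> r'. B x y = 0)))"
proof -
  obtain Basis where fd: "finite_dimensional_vector_space scale Basis"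
    using finite_dimensional_of_dim[OF vs dimV] nn3 by auto
  obtain \<epsilon> where eps: "\<epsilon> = 1 \<or> \<epsilon> = -1" "\<And>x y. B y x = \<epsilon> * B x y"
    using form_conditions_eps_sym[OF form] by blast
  have \<kappa>: "\<kappa> \<le> 1" using kappa by simp
  interpret A: adapted_vectors scale Basis B \<epsilon> g v p \<sigma> \<kappa>
    by (rule adapted_vectorsI[OF fd eps form g_iso p_pos p_mono \<kappa> v_orth v_self v_last])
  have N: "(\<lambda>x. g x - x) = A.N" by (simp add: fun_eq_iff A.N_def)
  have dim0: "vector_space.dim scale (range (A.N ^^ 0)) = Lam p \<sigma> \<kappa> 0"
    using dimV p_sum kappa n_def by (simp add: Lam_zero)
  have lower: "Lam p \<sigma> \<kappa> k \<le> vector_space.dim scale (range (A.N ^^ k))" for k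
    using A.dim_range_lower[of k] dim0 \<kappa> Lam_pos by (cases "k = 0") auto
  show ?thesis
    unfolding N using A.X_complement A.X_nondegenerate lower dim0 A.blocks_stable_orthogonal
    by (intro conjI impI allI ballI) auto
qed

end
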